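(* Let $\kappa>0$ be a cardinal and let $T_\kappa$ be a tournament with at most $\mathsf{exp}_{10}(\kappa)$ vertices such that every $\kappa$-edge-colouring of $T_\kappa$ contains a quasi-monochromatic directed cycle of length three; put $\lambda_\kappa=|V(T_\kappa)|$. Let $T$ be a $\kappa$-edge-coloured tournament that has no king-serf duo by monochromatic paths of size at most $\lambda_\kappa$. Then $T$ has a subtournament isomorphic to $T_\kappa$ all of whose edges are forbidding edges of $T$.
   Context: A tournament is a directed graph obtained by orienting every edge of a (possibly infinite) complete undirected graph. For a cardinal $\kappa$, $\mathsf{exp}_0(\kappa)=\kappa$, $\mathsf{exp}_{k+1}(\kappa)=2^{\mathsf{exp}_k(\kappa)}$. A $\kappa$-edge-colouring of $T$ is a function $c:A(T)\to\kappa$. A monochromatic path is a directed path (no repeated vertices) whose edges all have the same colour. A directed cycle is quasi-monochromatic if all but at most one of its edges have the same colour. A king-serf duo by monochromatic paths in $T$ is a pair of disjoint sets $K,S\subseteq V(T)$ such that every vertex $v$ has a monochromatic path of length at most two from a vertex of $K$ to $v$ or from $v$ to a vertex of $S$; its size is $|K|+|S|$. An edge $uv$ of $T$ is forbidding if there is no monochromatic path of length at most two from $v$ to $u$ in $T$. *)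

theory Defs
  imports Main "HOL-Library.Equipollence"
begin

definition tournament :: "'v set \<Rightarrow> ('v \<Rightarrow> 'v \<Rightarrow> bool) \<Rightarrow> bool" where
  "tournament V E \<longleftrightarrow>
     (\<forall>u v. E u v \<longrightarrow> u \<in> V \<and> v \<in> V) \<and>
     (\<forall>u v. E u v \<longrightarrow> \<not> E v u) \<and>
     (\<forall>u\<in>V. \<forall>v\<in>V. u \<noteq> v \<longrightarrow> E u v \<or> E v u)"

definition edge_colouring :: "('v \<Rightarrow> 'v \<Rightarrow> bool) \<Rightarrow> 'c set \<Rightarrow> ('v \<Rightarrow> 'v \<Rightarrow> 'c) \<Rightarrow> bool" where
  "edge_colouring E C col \<longleftrightarrow> (\<forall>u v. E u v \<longrightarrow> col u v \<in> C)"

definition mono_path_le2 :: "('v \<Rightarrow> 'v \<Rightarrow> bool) \<Rightarrow> ('v \<Rightarrow> 'v \<Rightarrow> 'c) \<Rightarrow> 'v \<Rightarrow> 'v \<Rightarrow> bool" where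
  "mono_path_le2 E col x y \<longleftrightarrow>
     x = y \<or> E x y \<or>
     (\<exists>z. x \<noteq> y \<and> z \<noteq> x \<and> z \<noteq> y \<and> E x z \<and> E z y \<and> col x z = col z y)"

definition king_serf_duo ::
  "'v set \<Rightarrow> ('v \<Rightarrow> 'v \<Rightarrow> bool) \<Rightarrow> ('v \<Rightarrow> 'v \<Rightarrow> 'c) \<Rightarrow> 'v set \<Rightarrow> 'v set \<Rightarrow> bool" where
  "king_serf_duo V E col K S \<longleftrightarrow>
     K \<subseteq> V \<and> S \<subseteq> V \<and> K \<inter> S = {} \<and>
     (\<forall>v\<in>V. (\<exists>k\<in>K. mono_path_le2 E col k v) \<or> (\<exists>s\<in>S. mono_path_le2 E col v s))"

definition forbidding :: "('v \<Rightarrow> 'v \<Rightarrow> bool) \<Rightarrow> ('v \<Rightarrow> 'v \<Rightarrow> 'c) \<Rightarrow> 'v \<Rightarrow> 'v \<Rightarrow> bool" where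
  "forbidding E col u v \<longleftrightarrow> E u v \<and> \<not> mono_path_le2 E col v u"

definition has_qm_triangle :: "'w set \<Rightarrow> ('w \<Rightarrow> 'w \<Rightarrow> bool) \<Rightarrow> ('w \<Rightarrow> 'w \<Rightarrow> 'c) \<Rightarrow> bool" where
  "has_qm_triangle W E col \<longleftrightarrow>
     (\<exists>a\<in>W. \<exists>b\<in>W. \<exists>c\<in>W. a \<noteq> b \<and> b \<noteq> c \<and> a \<noteq> c \<and> E a b \<and> E b c \<and> E c a \<and>
        (col a b = col b c \<or> col b c = col c a \<or> col a b = col c a))"

text \<open>A set of cardinality exp_10(|C|): the power set operation iterated ten times (so exp_10).\<close>
definition pow10 :: "'c set \<Rightarrow> 'c set set set set set set set set set set set" where
  "pow10 C = Pow (Pow (Pow (Pow (Pow (Pow (Pow (Pow (Pow (Pow (C))))))))))"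

end

theory Submission
  imports Defs
begin

text \<open>Order the partial maps from \<open>W\<close> to \<open>V\<close> that send arcs to forbidding edges by inclusion
  and take a maximal one by Zorn's lemma. If it missed a vertex \<open>w\<close>, the images \<open>K\<close> of the
  out-neighbours and \<open>S\<close> of the in-neighbours of \<open>w\<close> are disjoint and of size at most \<open>|W|\<close>, so
  they are not a king-serf duo: some vertex \<open>v\<close> reaches no element of \<open>K\<close>, and is reached by no
  element of \<open>S\<close>, by a short monochromatic path. Then all edges from \<open>v\<close> to \<open>K\<close> and from \<open>S\<close> to
  \<open>v\<close> are forbidding, and \<open>w \<mapsto> v\<close> extends the map. A total such map is an embedding, because
  forbidding edges are arcs and both structures are tournaments. The argument works for any
  tournament \<open>W\<close>.\<close>

lemma tournament_arcD:
  assumes "tournament V E" "E u v"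
  shows "u \<in> V" "v \<in> V" "\<not> E v u" "u \<noteq> v"
  using assms unfolding tournament_def by blast+

lemma tournament_total:
  assumes "tournament V E" "u \<in> V" "v \<in> V" "u \<noteq> v"
  shows "E u v \<or> E v u"
  using assms unfolding tournament_def by blast

lemma forbidding_imp_arc: "forbidding E col u v \<Longrightarrow> E u v"
  unfolding forbidding_def by blast

lemma not_mono_path_imp_forbidding:
  assumes "tournament V E" "u \<in> V" "v \<in> V" "\<not> mono_path_le2 E col u v"
  shows "forbidding E col v u"
  using assms tournament_total[of V E u v] unfolding forbidding_def mono_path_le2_def by blast

lemma not_king_serf_duo_imp_forbidding_vertex:
  assumes "tournament V E" "K \<subseteq> V" "S \<subseteq> V" "K \<inter> S = {}"
    and "\<not> king_serf_duo V E col K S"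
  obtains v where "v \<in> V" "\<And>k. k \<in> K \<Longrightarrow> forbidding E col v k"
    "\<And>s. s \<in> S \<Longrightarrow> forbidding E col s v"
proof -
  obtain v where "v \<in> V" "\<forall>k\<in>K. \<not> mono_path_le2 E col k v"
    "\<forall>s\<in>S. \<not> mono_path_le2 E col v s"
    using assms(2-5) unfolding king_serf_duo_def by blast
  with assms(2,3) show ?thesis
    using that not_mono_path_imp_forbidding[OF assms(1)] by blast
qed

lemma single_valued_Range_lepoll_Domain:
  assumes "single_valued R"
  shows "Range R \<lesssim> Domain R"
proof -
  have "Range R \<subseteq> (\<lambda>x. THE y. (x, y) \<in> R) ` Domain R"
  proof
    fix y assume "y \<in> Range R"
    then obtain x where "(x, y) \<in> R" by blast
    with assms have "y = (THE y. (x, y) \<in> R)"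
      by (auto simp: single_valued_def intro: the_equality[symmetric])
    with \<open>(x, y) \<in> R\<close> show "y \<in> (\<lambda>x. THE y. (x, y) \<in> R) ` Domain R" by blast
  qed
  then show ?thesis
    by (meson image_lepoll lepoll_trans subset_imp_lepoll)
qed

definition forbidding_partial_maps ::
  "'w set \<Rightarrow> ('w \<Rightarrow> 'w \<Rightarrow> bool) \<Rightarrow> 'v set \<Rightarrow> ('v \<Rightarrow> 'v \<Rightarrow> bool) \<Rightarrow> ('v \<Rightarrow> 'v \<Rightarrow> 'c)
     \<Rightarrow> ('w \<times> 'v) set set" where
  "forbidding_partial_maps W Ew V E col =
     {R. R \<subseteq> W \<times> V \<and> single_valued R \<and>
         (\<forall>x a y b. (x, a) \<in> R \<longrightarrow> (y, b) \<in> R \<longrightarrow> Ew x y \<longrightarrow> forbidding E col a b)}"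

lemma forbidding_partial_mapsI:
  assumes "R \<subseteq> W \<times> V"
    and "\<And>x a b. (x, a) \<in> R \<Longrightarrow> (x, b) \<in> R \<Longrightarrow> a = b"
    and "\<And>x a y b. (x, a) \<in> R \<Longrightarrow> (y, b) \<in> R \<Longrightarrow> Ew x y \<Longrightarrow> forbidding E col a b"
  shows "R \<in> forbidding_partial_maps W Ew V E col"
  using assms unfolding forbidding_partial_maps_def single_valued_def by blast

lemma forbidding_partial_mapsD:
  assumes "R \<in> forbidding_partial_maps W Ew V E col"
  shows "R \<subseteq> W \<times> V" "single_valued R"
    "\<And>x a y b. (x, a) \<in> R \<Longrightarrow> (y, b) \<in> R \<Longrightarrow> Ew x y \<Longrightarrow> forbidding E col a b"
  using assms unfolding forbidding_partial_maps_def by blast+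

lemma chain_subset_Union_pair:
  assumes "chain\<^sub>\<subseteq> Ch" "p \<in> \<Union>Ch" "q \<in> \<Union>Ch"
  obtains R where "R \<in> Ch" "p \<in> R" "q \<in> R"
  using assms unfolding chain_subset_def by blast

lemma forbidding_partial_maps_chain_Union:
  assumes "Ch \<in> chains (forbidding_partial_maps W Ew V E col)"
  shows "\<Union>Ch \<in> forbidding_partial_maps W Ew V E col"
proof -
  have sub: "\<And>R. R \<in> Ch \<Longrightarrow> R \<in> forbidding_partial_maps W Ew V E col"
    and chain: "chain\<^sub>\<subseteq> Ch"
    using assms unfolding chains_def by auto
  show ?thesis
  proof (rule forbidding_partial_mapsI)
    show "\<Union>Ch \<subseteq> W \<times> V"
      using forbidding_partial_mapsD(1)[OF sub] by blast
  next
    fix x a b assume "(x, a) \<in> \<Union>Ch" "(x, b) \<in> \<Union>Ch"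
    with chain obtain R where "R \<in> Ch" "(x, a) \<in> R" "(x, b) \<in> R"
      by (rule chain_subset_Union_pair)
    then show "a = b"
      using forbidding_partial_mapsD(2)[OF sub] unfolding single_valued_def by blast
  next
    fix x a y b assume "(x, a) \<in> \<Union>Ch" "(y, b) \<in> \<Union>Ch" "Ew x y"
    moreover from chain this(1,2) obtain R where "R \<in> Ch" "(x, a) \<in> R" "(y, b) \<in> R"
      by (rule chain_subset_Union_pair)
    ultimately show "forbidding E col a b"
      using forbidding_partial_mapsD(3)[OF sub] by blast
  qed
qed

lemma forbidding_partial_map_extend:
  assumes W: "tournament W Ew" and V: "tournament V E"
    and R: "R \<in> forbidding_partial_maps W Ew V E col"
    and w: "w \<in> W" "w \<notin> Domain R"
    and no_duo: "\<not> (\<exists>K S. king_serf_duo V E col K S \<and> K \<union> S \<lesssim> W)"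
  obtains v where "insert (w, v) R \<in> forbidding_partial_maps W Ew V E col"
proof -
  note RWV = forbidding_partial_mapsD(1)[OF R] and sv = forbidding_partial_mapsD(2)[OF R]
    and forb = forbidding_partial_mapsD(3)[OF R]
  define K where "K = R `` {x. Ew w x}"
  define S where "S = R `` {x. Ew x w}"
  have "K \<inter> S = {}"
  proof (rule ccontr)
    assume "K \<inter> S \<noteq> {}"
    then obtain a x x' where xa: "(x, a) \<in> R" "Ew w x" and x'a: "(x', a) \<in> R" "Ew x' w"
      unfolding K_def S_def by blast
    have "x \<noteq> x'" using tournament_arcD(3)[OF W xa(2)] x'a(2) by blast
    moreover have "x \<in> W" "x' \<in> W" using xa(1) x'a(1) RWV by auto
    ultimately have "Ew x x' \<or> Ew x' x" by (rule tournament_total[OF W, rotated 2])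
    then have "forbidding E col a a" using forb[OF xa(1) x'a(1)] forb[OF x'a(1) xa(1)] by blast
    then show False using forbidding_imp_arc tournament_arcD(4)[OF V] by metis
  qed
  moreover have "K \<union> S \<lesssim> W"
  proof -
    have "K \<union> S \<subseteq> Range R" unfolding K_def S_def by blast
    moreover have "Domain R \<subseteq> W" using RWV by blast
    ultimately show ?thesis
      using single_valued_Range_lepoll_Domain[OF sv]
      by (meson lepoll_trans subset_imp_lepoll)
  qed
  moreover have "K \<subseteq> V" "S \<subseteq> V" using RWV unfolding K_def S_def by blast+
  ultimately obtain v where v: "v \<in> V" and vK: "\<And>k. k \<in> K \<Longrightarrow> forbidding E col v k"
    and vS: "\<And>s. s \<in> S \<Longrightarrow> forbidding E col s v"
    using not_king_serf_duo_imp_forbidding_vertex[OF V] no_duo by metis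
  have "insert (w, v) R \<in> forbidding_partial_maps W Ew V E col"
  proof (rule forbidding_partial_mapsI)
    show "insert (w, v) R \<subseteq> W \<times> V" using RWV w v by blast
  next
    fix x a b assume "(x, a) \<in> insert (w, v) R" "(x, b) \<in> insert (w, v) R"
    then show "a = b" using sv w(2) unfolding single_valued_def by blast
  next
    fix x a y b assume xa: "(x, a) \<in> insert (w, v) R" and yb: "(y, b) \<in> insert (w, v) R"
      and "Ew x y"
    have "\<not> Ew w w" using tournament_arcD(4)[OF W] by blast
    then consider "(x, a) = (w, v)" "(y, b) \<in> R" | "(x, a) \<in> R" "(y, b) = (w, v)"
      | "(x, a) \<in> R" "(y, b) \<in> R"
      using xa yb \<open>Ew x y\<close> by blast
    then show "forbidding E col a b"
    proof cases
      case 1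
      then show ?thesis using vK \<open>Ew x y\<close> unfolding K_def by blast
    next
      case 2
      then show ?thesis using vS \<open>Ew x y\<close> unfolding S_def by blast
    next
      case 3
      then show ?thesis using forb \<open>Ew x y\<close> by blast
    qed
  qed
  then show ?thesis by (rule that)
qed

lemma exists_total_forbidding_map:
  assumes W: "tournament W Ew" and V: "tournament V E"
    and no_duo: "\<not> (\<exists>K S. king_serf_duo V E col K S \<and> K \<union> S \<lesssim> W)"
  obtains g where "g ` W \<subseteq> V" "\<forall>x\<in>W. \<forall>y\<in>W. Ew x y \<longrightarrow> forbidding E col (g x) (g y)"
proof -
  let ?A = "forbidding_partial_maps W Ew V E col"
  have "\<forall>Ch \<in> chains ?A. \<Union>Ch \<in> ?A"
    using forbidding_partial_maps_chain_Union by blast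
  then obtain M where M: "M \<in> ?A" and maximal: "\<And>X. X \<in> ?A \<Longrightarrow> M \<subseteq> X \<Longrightarrow> X = M"
    by (meson Zorn_Lemma)
  have total: "W \<subseteq> Domain M"
  proof
    fix w assume "w \<in> W"
    show "w \<in> Domain M"
    proof (rule ccontr)
      assume "w \<notin> Domain M"
      then obtain v where "insert (w, v) M \<in> ?A"
        using forbidding_partial_map_extend[OF W V M \<open>w \<in> W\<close> _ no_duo] by blast
      with maximal have "insert (w, v) M = M" by blast
      with \<open>w \<notin> Domain M\<close> show False by blast
    qed
  qed
  define g where "g x = (THE a. (x, a) \<in> M)" for x
  have graph: "(x, g x) \<in> M" if "x \<in> W" for x
  proof -
    from that total obtain a where "(x, a) \<in> M" by blast
    moreover from this have "g x = a"
      using forbidding_partial_mapsD(2)[OF M] unfolding g_def single_valued_def by blast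
    ultimately show ?thesis by simp
  qed
  show ?thesis
  proof (rule that)
    show "g ` W \<subseteq> V" using graph forbidding_partial_mapsD(1)[OF M] by blast
    show "\<forall>x\<in>W. \<forall>y\<in>W. Ew x y \<longrightarrow> forbidding E col (g x) (g y)"
      using graph forbidding_partial_mapsD(3)[OF M] by blast
  qed
qed

lemma forbidding_map_is_embedding:
  assumes W: "tournament W Ew" and V: "tournament V E"
    and forb: "\<forall>x\<in>W. \<forall>y\<in>W. Ew x y \<longrightarrow> forbidding E col (g x) (g y)"
  shows "inj_on g W" "\<forall>x\<in>W. \<forall>y\<in>W. Ew x y \<longleftrightarrow> E (g x) (g y)"
proof -
  have arc: "E (g x) (g y)" if "x \<in> W" "y \<in> W" "Ew x y" for x y
    using forb that by (simp add: forbidding_def)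
  have one_way: "Ew x y \<or> Ew y x" if "x \<in> W" "y \<in> W" "x \<noteq> y" for x y
    using tournament_total[OF W] that by blast
  have irrefl: "\<not> E a a" for a
    using tournament_arcD(4)[OF V] by blast
  have asym: "\<not> E b a" if "E a b" for a b
    using tournament_arcD(3)[OF V that] .
  show "inj_on g W"
  proof (rule inj_onI, rule ccontr)
    fix x y assume "x \<in> W" "y \<in> W" "g x = g y" "x \<noteq> y"
    then show False using one_way[of x y] arc[of x y] arc[of y x] irrefl[of "g x"] by auto
  qed
  show "\<forall>x\<in>W. \<forall>y\<in>W. Ew x y \<longleftrightarrow> E (g x) (g y)"
  proof (intro ballI iffI)
    fix x y assume "x \<in> W" "y \<in> W"
    show "E (g x) (g y)" if "Ew x y" using arc \<open>x \<in> W\<close> \<open>y \<in> W\<close> that .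
    show "Ew x y" if "E (g x) (g y)"
      using one_way[of x y] arc[of y x] asym[OF that] irrefl[of "g x"] that \<open>x \<in> W\<close> \<open>y \<in> W\<close>
      by auto
  qed
qed

theorem lemma5:
  fixes C :: "'c set" and W :: "'w set" and Ew :: "'w \<Rightarrow> 'w \<Rightarrow> bool"
    and V :: "'v set" and E :: "'v \<Rightarrow> 'v \<Rightarrow> bool" and col :: "'v \<Rightarrow> 'v \<Rightarrow> 'c"
  assumes kappa_pos: "C \<noteq> {}"
    and Tk_tour: "tournament W Ew"
    and Tk_size: "W \<lesssim> pow10 C"
    and Tk_prop: "\<forall>d. edge_colouring Ew C d \<longrightarrow> has_qm_triangle W Ew d"
    and T_tour: "tournament V E"
    and T_col: "edge_colouring E C col"
    and no_duo: "\<not> (\<exists>K S. king_serf_duo V E col K S \<and> K \<union> S \<lesssim> W)"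
  shows "\<exists>f. inj_on f W \<and> f ` W \<subseteq> V \<and>
           (\<forall>x\<in>W. \<forall>y\<in>W. Ew x y \<longleftrightarrow> E (f x) (f y)) \<and>
           (\<forall>x\<in>W. \<forall>y\<in>W. Ew x y \<longrightarrow> forbidding E col (f x) (f y))"
proof -
  obtain g where "g ` W \<subseteq> V" and forb: "\<forall>x\<in>W. \<forall>y\<in>W. Ew x y \<longrightarrow> forbidding E col (g x) (g y)"
    using exists_total_forbidding_map[OF Tk_tour T_tour no_duo] by blast
  with forbidding_map_is_embedding[OF Tk_tour T_tour forb] show ?thesis by blast
qed

end
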